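(* Let $\beta>0$, $k_d>0$, $N$ constant and $t>0$. Let $(x,y)=r(\cos\phi,\sin\phi)$ with $r>0$, and set $\alpha=\beta rt$ and $\gamma=\cos(\phi/2)$. Let $$\psi_G=-\frac{N}{2\pi}\int_0^\infty\frac{k}{k^2+k_d^2}J_0\!\left(\left[\left(kx+\frac{\beta kt}{k^2+k_d^2}\right)^2+k^2y^2\right]^{1/2}\right)dk.$$ For $z\ge0$ define $$\delta_1(z)=1-\frac{k_d^2r^2}{\alpha(\sqrt{z^2+1}-z)^2},\qquad \delta_2(z)=1-\frac{k_d^2r^2}{\alpha(\sqrt{z^2+1}+z)^2},$$ and $$A_j(z)=\left[4\alpha\,\delta_j(z)\,(z^2+\gamma^2)\right]^{1/2},\qquad j=1,2.$$ (i) Near region, $r<\beta t/k_d^2$. Set $z_{01}=(\alpha-k_d^2r^2)/(\sqrt{4\alpha}\,k_dr)>0$. Then $$\psi_G=-\frac{N}{2\pi}\left(\int_0^{z_{01}}\frac{J_0(A_1(z))}{\sqrt{z^2+1}}dz+\int_0^{\infty}\frac{J_0(A_2(z))}{\sqrt{z^2+1}}dz\right)=-\frac{N}{2\pi}\int_{-z_{01}}^\infty\frac{J_0(A_2(z))}{\sqrt{z^2+1}}dz,$$ where in the last integral $\delta_2$ and $A_2$ are given by the same formulas for negative $z$. (ii) Far region, $r>\beta t/k_d^2$. Set $z_{02}=(k_d^2r^2-\alpha)/(\sqrt{4\alpha}\,k_dr)>0$. Then $$\psi_G=-\frac{N}{2\pi}\int_{z_{02}}^\infty\frac{J_0(A_2(z))}{\sqrt{z^2+1}}dz.$$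 In both cases the change of variables is $z=|(k^2+k_d^2)r^2-\alpha|/(2\sqrt{\alpha(k^2+k_d^2)r^2})$. Its inverse is $(k^2+k_d^2)r^2=\alpha(\sqrt{z^2+1}\mp z)^2$, with the minus sign for $k^2<\beta t/r-k_d^2$ and the plus sign otherwise.
   Context: $J_0$ is the Bessel function of the first kind of order zero. $\psi_G$ is the no-wind Rossby wave Green's function with inverse deformation radius $k_d$. *)

theory Defs
  imports "HOL-Analysis.Analysis"
begin

definition bessel_J0 :: "real \<Rightarrow> real" where
  "bessel_J0 x = (\<Sum>m. (-1)^m / (fact m)^2 * (x/2)^(2*m))"

definition psi_G_integrand :: "real \<Rightarrow> real \<Rightarrow> real \<Rightarrow> real \<Rightarrow> real \<Rightarrow> real \<Rightarrow> real" where
  "psi_G_integrand beta kd t x y k =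
     k / (k^2 + kd^2) *
     bessel_J0 (sqrt ((k*x + beta*k*t / (k^2 + kd^2))^2 + k^2 * y^2))"

definition psi_G :: "real \<Rightarrow> real \<Rightarrow> real \<Rightarrow> real \<Rightarrow> real \<Rightarrow> real \<Rightarrow> real" where
  "psi_G N beta kd t x y =
     - (N / (2*pi)) * (LBINT k:{0..}. psi_G_integrand beta kd t x y k)"

text \<open>Auxiliary functions delta_1, delta_2, A_1, A_2 (alpha = beta r t, gamma = cos(phi/2)).\<close>
definition delta1 :: "real \<Rightarrow> real \<Rightarrow> real \<Rightarrow> real \<Rightarrow> real" where
  "delta1 alpha kd r z = 1 - kd^2 * r^2 / (alpha * (sqrt (z^2 + 1) - z)^2)"

definition delta2 :: "real \<Rightarrow> real \<Rightarrow> real \<Rightarrow> real \<Rightarrow> real" where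
  "delta2 alpha kd r z = 1 - kd^2 * r^2 / (alpha * (sqrt (z^2 + 1) + z)^2)"

definition A1 :: "real \<Rightarrow> real \<Rightarrow> real \<Rightarrow> real \<Rightarrow> real \<Rightarrow> real" where
  "A1 alpha gamma kd r z = sqrt (4 * alpha * delta1 alpha kd r z * (z^2 + gamma^2))"

definition A2 :: "real \<Rightarrow> real \<Rightarrow> real \<Rightarrow> real \<Rightarrow> real \<Rightarrow> real" where
  "A2 alpha gamma kd r z = sqrt (4 * alpha * delta2 alpha kd r z * (z^2 + gamma^2))"

end

theory Submission
  imports Defs "HOL-Real_Asymp.Real_Asymp"
begin

text \<open>
  Put \<open>s = r sqrt(k\<^sup>2 + kd\<^sup>2) / sqrt \<alpha>\<close> and \<open>z = (s - 1/s)/2\<close>, a signed version of the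
  paper's change of variables; it increases from \<open>z02\<close> to \<open>\<infinity>\<close> as \<open>k\<close> runs over \<open>[0, \<infinity>)\<close>.
  Then \<open>sqrt(z\<^sup>2 + 1) + z = s\<close>, so \<open>\<delta>\<^sub>2(z) = k\<^sup>2/(k\<^sup>2 + kd\<^sup>2)\<close>, \<open>A\<^sub>2(z)\<close> is exactly the Bessel
  argument in \<open>\<psi>\<^sub>G\<close>, and \<open>dz / sqrt(z\<^sup>2 + 1) = k dk / (k\<^sup>2 + kd\<^sup>2)\<close>. Hence
  \<open>\<psi>\<^sub>G = -N/(2\<pi>) \<integral>\<^sub>z\<^sub>0\<^sub>2\<^sup>\<infinity> J\<^sub>0(A\<^sub>2(z)) / sqrt(z\<^sup>2 + 1) dz\<close> in both regions; in the near region
  \<open>z02 = -z01 < 0\<close>, and splitting at \<open>0\<close> and reflecting (\<open>\<delta>\<^sub>1(z) = \<delta>\<^sub>2(-z)\<close>) gives the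
  two-integral form. Absolute integrability comes from the decay \<open>|J\<^sub>0(x)| \<le> C / sqrt x\<close>,
  which follows from a Lyapunov function for Bessel's equation.
\<close>

section \<open>The Bessel function \<open>J\<^sub>0\<close>\<close>

definition bessel_coeff :: "nat \<Rightarrow> real" where
  "bessel_coeff m = (-1)^m / (fact m)\<^sup>2"

text \<open>The power series of \<open>J\<^sub>0\<close> in the variable \<open>w = (x/2)\<^sup>2\<close>.\<close>
definition bessel_series :: "real \<Rightarrow> real" where
  "bessel_series w = (\<Sum>n. bessel_coeff n * w^n)"

definition bessel_series' :: "real \<Rightarrow> real" where
  "bessel_series' w = (\<Sum>n. diffs bessel_coeff n * w^n)"

definition bessel_series'' :: "real \<Rightarrow> real" where
  "bessel_series'' w = (\<Sum>n. diffs (diffs bessel_coeff) n * w^n)"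

lemma summable_bessel_coeff: "summable (\<lambda>n. bessel_coeff n * w^n)"
proof (rule summable_comparison_test[OF _ summable_exp[of "\<bar>w\<bar>"]])
  show "\<exists>N. \<forall>n\<ge>N. norm (bessel_coeff n * w^n) \<le> inverse (fact n) * \<bar>w\<bar>^n"
  proof (intro exI allI impI)
    fix n :: nat
    have "\<bar>bessel_coeff n\<bar> = 1 / (fact n)\<^sup>2"
      by (simp add: bessel_coeff_def abs_mult)
    also have "\<dots> \<le> inverse (fact n)"
      using fact_ge_1[of n, where 'a=real] by (simp add: power2_eq_square field_simps)
    finally show "norm (bessel_coeff n * w^n) \<le> inverse (fact n) * \<bar>w\<bar>^n"
      by (simp add: abs_mult power_abs mult_right_mono)
  qed
qed

lemma summable_diffs_bessel_coeff: "summable (\<lambda>n. diffs bessel_coeff n * w^n)"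
  by (rule termdiff_converges_all) (rule summable_bessel_coeff)

lemma summable_diffs_diffs_bessel_coeff: "summable (\<lambda>n. diffs (diffs bessel_coeff) n * w^n)"
  by (rule termdiff_converges_all) (rule summable_diffs_bessel_coeff)

lemma has_real_derivative_bessel_series:
  "(bessel_series has_real_derivative bessel_series' w) (at w)"
  unfolding bessel_series_def bessel_series'_def
  by (rule termdiffs_strong_converges_everywhere) (rule summable_bessel_coeff)

lemma has_real_derivative_bessel_series':
  "(bessel_series' has_real_derivative bessel_series'' w) (at w)"
  unfolding bessel_series'_def bessel_series''_def
  by (rule termdiffs_strong_converges_everywhere) (rule summable_diffs_bessel_coeff)

lemma bessel_coeff_Suc: "bessel_coeff (Suc n) = - bessel_coeff n / (real (Suc n))\<^sup>2"
  by (simp add: bessel_coeff_def field_simps power2_eq_square)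

lemma bessel_series_ode: "w * bessel_series'' w + bessel_series' w + bessel_series w = 0"
proof -
  define S where "S n = (bessel_coeff n + diffs bessel_coeff n) * w^n" for n
  have S_0: "S 0 = 0"
    by (simp add: S_def diffs_def bessel_coeff_def)
  have S_Suc: "S (Suc n) = - (w * (diffs (diffs bessel_coeff) n * w^n))" for n
  proof -
    have "bessel_coeff (Suc n) + diffs bessel_coeff (Suc n) = - diffs (diffs bessel_coeff) n"
      unfolding diffs_def bessel_coeff_Suc[of "Suc n"]
      by (simp add: divide_simps) (simp add: algebra_simps power2_eq_square)
    then show ?thesis by (simp add: S_def)
  qed
  have "(\<lambda>n. w * (diffs (diffs bessel_coeff) n * w^n)) sums (w * bessel_series'' w)"
    unfolding bessel_series''_def by (intro sums_mult summable_sums summable_diffs_diffs_bessel_coeff)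
  then have "(\<lambda>n. S (Suc n)) sums (- (w * bessel_series'' w))"
    unfolding S_Suc by (rule sums_minus)
  then have "S sums (- (w * bessel_series'' w))"
    using sums_Suc_iff[of S] S_0 by simp
  moreover have "S sums (bessel_series w + bessel_series' w)"
    unfolding S_def bessel_series_def bessel_series'_def distrib_right
    by (intro sums_add summable_sums summable_bessel_coeff summable_diffs_bessel_coeff)
  ultimately show ?thesis
    using sums_unique2 by force
qed

lemma bessel_J0_eq_bessel_series: "bessel_J0 x = bessel_series ((x/2)\<^sup>2)"
  unfolding bessel_J0_def bessel_series_def bessel_coeff_def by (simp add: power_mult)

definition bessel_J0' :: "real \<Rightarrow> real" where
  "bessel_J0' x = bessel_series' ((x/2)\<^sup>2) * (x/2)"

definition bessel_J0'' :: "real \<Rightarrow> real" where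
  "bessel_J0'' x = bessel_series'' ((x/2)\<^sup>2) * (x/2) * (x/2) + bessel_series' ((x/2)\<^sup>2) / 2"

lemma has_real_derivative_bessel_J0: "(bessel_J0 has_real_derivative bessel_J0' x) (at x)"
proof -
  have "((\<lambda>x. bessel_series ((x/2)\<^sup>2)) has_real_derivative
      bessel_series' ((x/2)\<^sup>2) * (2 * (x/2) * (1/2))) (at x)"
    by (rule DERIV_chain2[OF has_real_derivative_bessel_series]) (auto intro!: derivative_eq_intros)
  then show ?thesis
    unfolding bessel_J0'_def by (simp add: bessel_J0_eq_bessel_series[abs_def])
qed

lemma has_real_derivative_bessel_J0': "(bessel_J0' has_real_derivative bessel_J0'' x) (at x)"
proof -
  have "((\<lambda>x. bessel_series' ((x/2)\<^sup>2)) has_real_derivative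
      bessel_series'' ((x/2)\<^sup>2) * (2 * (x/2) * (1/2))) (at x)"
    by (rule DERIV_chain2[OF has_real_derivative_bessel_series']) (auto intro!: derivative_eq_intros)
  then have "((\<lambda>x. bessel_series' ((x/2)\<^sup>2) * (x/2)) has_real_derivative
      bessel_series'' ((x/2)\<^sup>2) * (2 * (x/2) * (1/2)) * (x/2) + bessel_series' ((x/2)\<^sup>2) * (1/2)) (at x)"
    by (auto intro!: derivative_eq_intros)
  then show ?thesis
    unfolding bessel_J0'_def[abs_def] bessel_J0''_def by simp
qed

lemma bessel_J0_ode: "x * bessel_J0'' x + bessel_J0' x + x * bessel_J0 x = 0"
proof -
  have "x * bessel_J0'' x + bessel_J0' x + x * bessel_J0 x
      = x * ((x/2)\<^sup>2 * bessel_series'' ((x/2)\<^sup>2) + bessel_series' ((x/2)\<^sup>2) + bessel_series ((x/2)\<^sup>2))"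
    unfolding bessel_J0''_def bessel_J0'_def bessel_J0_eq_bessel_series
    by (simp add: algebra_simps power2_eq_square)
  then show ?thesis
    using bessel_series_ode by simp
qed

text \<open>Along a solution of Bessel's equation the energy \<open>H\<close> below has derivative
  \<open>-y\<^sup>2/(2x\<^sup>2) \<le> 0\<close>, and \<open>x y\<^sup>2 \<le> H\<close> after completing the square.\<close>
lemma bessel_ode_solution_bound:
  fixes y y' y'' :: "real \<Rightarrow> real"
  assumes y: "\<And>x. (y has_real_derivative y' x) (at x)"
    and y': "\<And>x. (y' has_real_derivative y'' x) (at x)"
    and ode: "\<And>x. x * y'' x + y' x + x * y x = 0"
    and "1 \<le> x"
  shows "x * (y x)\<^sup>2 \<le> (y 1)\<^sup>2 + (y' 1)\<^sup>2 + y 1 * y' 1 + (y 1)\<^sup>2 / 2"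
proof -
  define H where "H x = x * ((y x)\<^sup>2 + (y' x)\<^sup>2) + y x * y' x + (y x)\<^sup>2 / (2*x)" for x
  have "H x \<le> H 1"
  proof (rule DERIV_nonpos_imp_nonincreasing[OF \<open>1 \<le> x\<close>])
    fix t :: real
    assume t: "1 \<le> t" "t \<le> x"
    have "(H has_real_derivative
        ((y t)\<^sup>2 + (y' t)\<^sup>2) + t * (2 * y t * y' t + 2 * y' t * y'' t)
        + (y' t * y' t + y t * y'' t)
        + ((2 * y t * y' t) * (2*t) - (y t)\<^sup>2 * 2) / (2*t)\<^sup>2) (at t)"
      unfolding H_def[abs_def] using t
      by (auto intro!: derivative_eq_intros y y' simp: power2_eq_square)
    moreover have y'': "y'' t = - y t - y' t / t"
      using ode[of t] t by (simp add: field_simps)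
    have "((y t)\<^sup>2 + (y' t)\<^sup>2) + t * (2 * y t * y' t + 2 * y' t * y'' t)
        + (y' t * y' t + y t * y'' t)
        + ((2 * y t * y' t) * (2*t) - (y t)\<^sup>2 * 2) / (2*t)\<^sup>2 = - ((y t)\<^sup>2 / (2 * t\<^sup>2))"
      unfolding y'' using t by (simp add: field_simps power2_eq_square)
    ultimately show "\<exists>d. (H has_real_derivative d) (at t) \<and> d \<le> 0"
      by (metis neg_le_0_iff_le zero_le_divide_iff zero_le_mult_iff zero_le_numeral zero_le_power2)
  qed
  moreover have "x * (y x)\<^sup>2 \<le> H x"
  proof -
    have "0 \<le> x * (y' x + y x / (2*x))\<^sup>2 + (y x)\<^sup>2 / (4*x)"
      using \<open>1 \<le> x\<close> by simp
    also have "\<dots> = H x - x * (y x)\<^sup>2"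
      unfolding H_def using \<open>1 \<le> x\<close> by (simp add: field_simps power2_eq_square)
    finally show ?thesis by simp
  qed
  ultimately show ?thesis
    unfolding H_def by simp
qed

lemma bessel_J0_decay: "\<exists>C. \<forall>x\<ge>1. \<bar>bessel_J0 x\<bar> \<le> C / sqrt x"
proof -
  define C where "C = (bessel_J0 1)\<^sup>2 + (bessel_J0' 1)\<^sup>2 + bessel_J0 1 * bessel_J0' 1 + (bessel_J0 1)\<^sup>2 / 2"
  have bound: "x * (bessel_J0 x)\<^sup>2 \<le> C" if "1 \<le> x" for x
    unfolding C_def
    by (rule bessel_ode_solution_bound[OF has_real_derivative_bessel_J0 has_real_derivative_bessel_J0'
          bessel_J0_ode that])
  have "(bessel_J0 1)\<^sup>2 \<le> C"
    using bound[of 1] by simp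
  then have "0 \<le> C"
    by (rule order_trans[OF zero_le_power2])
  have "\<bar>bessel_J0 x\<bar> \<le> sqrt C / sqrt x" if "1 \<le> x" for x
  proof -
    have "(sqrt x * \<bar>bessel_J0 x\<bar>)\<^sup>2 \<le> (sqrt C)\<^sup>2"
      using bound[OF that] that \<open>0 \<le> C\<close> by (simp add: power_mult_distrib)
    then have "sqrt x * \<bar>bessel_J0 x\<bar> \<le> sqrt C"
      by (rule power2_le_imp_le) (use \<open>0 \<le> C\<close> in simp)
    then show ?thesis
      using that by (simp add: field_simps)
  qed
  then show ?thesis by blast
qed

lemma continuous_on_bessel_J0 [continuous_intros]:
  "continuous_on S f \<Longrightarrow> continuous_on S (\<lambda>x. bessel_J0 (f x))"
  using continuous_on_compose2[of UNIV bessel_J0 S f] DERIV_isCont[OF has_real_derivative_bessel_J0]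
  by (auto intro: continuous_at_imp_continuous_on)

section \<open>Integrals over half-lines\<close>

lemma set_integrable_inverse_mult_sqrt:
  fixes a :: real
  assumes "a > 0"
  shows "set_integrable lborel {a..} (\<lambda>x. 1 / (x * sqrt x))"
proof -
  have "set_integrable lborel (einterval (ereal a) \<infinity>) (\<lambda>x. 1 / (x * sqrt x))"
  proof (rule interval_integral_FTC_nonneg(1)[where F="\<lambda>x. - 2 / sqrt x" and A="- 2 / sqrt a" and B=0])
    fix x
    assume "ereal a < ereal x" "ereal x < \<infinity>"
    then have "x > 0"
      using assms by simp
    then show "((\<lambda>x. - 2 / sqrt x) has_real_derivative 1 / (x * sqrt x)) (at x)"
      and "isCont (\<lambda>x. 1 / (x * sqrt x)) x"
      by (auto intro!: derivative_eq_intros continuous_intros simp: field_simps)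
  next
    show "AE x in lborel. ereal a < ereal x \<longrightarrow> ereal x < \<infinity> \<longrightarrow> 0 \<le> 1 / (x * sqrt x)"
      using assms by (auto intro!: AE_I2)
    show "(((\<lambda>x. - 2 / sqrt x) \<circ> real_of_ereal) \<longlongrightarrow> - 2 / sqrt a) (at_right (ereal a))"
      unfolding ereal_tendsto_simps using assms by (auto intro!: tendsto_eq_intros)
    show "(((\<lambda>x. - 2 / sqrt x) \<circ> real_of_ereal) \<longlongrightarrow> 0) (at_left \<infinity>)"
      unfolding ereal_tendsto_simps by real_asymp
  qed simp
  then show ?thesis
    by (subst set_integrable_discrete_difference[where X="{a}" and B="{a<..}"]) auto
qed

lemma ereal_tendsto_at_right_of_isCont:
  "isCont g a \<Longrightarrow> ((ereal \<circ> g \<circ> real_of_ereal) \<longlongrightarrow> ereal (g a)) (at_right (ereal a))"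
  unfolding ereal_tendsto_simps o_assoc[symmetric] ereal_tendsto_simps
  by (simp add: isCont_def filterlim_at_split)

lemma ereal_tendsto_PInfty_of_filterlim_at_top:
  "filterlim g at_top at_top \<Longrightarrow> ((ereal \<circ> g \<circ> real_of_ereal) \<longlongrightarrow> \<infinity>) (at_left \<infinity>)"
  unfolding o_assoc[symmetric] ereal_tendsto_simps at_left_PInf filterlim_filtermap
  by (simp add: o_def tendsto_PInfty_eq_at_top)

lemma set_integral_substitution_atLeast:
  fixes f g g' :: "real \<Rightarrow> real"
  assumes deriv: "\<And>x. a \<le> x \<Longrightarrow> (g has_real_derivative g' x) (at x)"
    and cont_g': "\<And>x. a < x \<Longrightarrow> isCont g' x"
    and nonneg: "\<And>x. a \<le> x \<Longrightarrow> 0 \<le> g' x"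
    and g_top: "filterlim g at_top at_top"
    and cont_f: "continuous_on UNIV f"
    and int: "set_integrable lborel {a..} (\<lambda>x. g' x * f (g x))"
  shows "set_integrable lborel {g a..} f"
    and "(LBINT y:{g a..}. f y) = (LBINT x:{a..}. g' x * f (g x))"
proof -
  have isCont_f: "isCont f y" for y
    using cont_f by (simp add: continuous_on_eq_continuous_at)
  note lim_a = ereal_tendsto_at_right_of_isCont[OF DERIV_isCont[OF deriv[of a]]]
  note lim_top = ereal_tendsto_PInfty_of_filterlim_at_top[OF g_top]
  have int': "set_integrable lborel (einterval (ereal a) \<infinity>) (\<lambda>x. g' x * f (g x))"
    by (rule set_integrable_subset[OF int]) auto
  have "set_integrable lborel (einterval (ereal a) \<infinity>) (\<lambda>x. \<bar>f (g x)\<bar> * g' x)"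
  proof -
    have "\<bar>g' x * f (g x)\<bar> = \<bar>f (g x)\<bar> * g' x" if "x \<in> einterval (ereal a) \<infinity>" for x
      using nonneg[of x] that by (simp add: abs_mult)
    then show ?thesis
      using set_integrable_abs[OF int'] by (rule set_integrable_cong[THEN iffD1, rotated 2]) auto
  qed
  then have "set_integrable lborel (einterval (ereal (g a)) \<infinity>) (\<lambda>y. \<bar>f y\<bar>)"
    by (intro interval_integral_substitution_nonneg(1)[OF _ deriv _ cont_g' _ _ lim_a lim_top])
      (auto intro: isCont_rabs isCont_f nonneg)
  then have int_f: "set_integrable lborel {g a<..} f"
    using set_integrable_abs_iff'[of f lborel "{g a<..}"] cont_f
    by (simp add: borel_measurable_continuous_onI)
  then show int_f': "set_integrable lborel {g a..} f"
    by (subst set_integrable_discrete_difference[where X="{g a}" and B="{g a<..}"]) auto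
  have "(LBINT y=ereal (g a)..\<infinity>. f y) = (LBINT x=ereal a..\<infinity>. g' x *\<^sub>R f (g x))"
    by (rule interval_integral_substitution_integrable[OF _ deriv isCont_f cont_g' nonneg lim_a lim_top])
      (use int' int_f in auto)
  moreover have "(LBINT y=ereal (g a)..\<infinity>. f y) = (LBINT y:{g a..}. f y)"
    unfolding interval_integral_to_infinity_eq
    by (rule set_integral_discrete_difference[where X="{g a}"]) auto
  moreover have "(LBINT x=ereal a..\<infinity>. g' x *\<^sub>R f (g x)) = (LBINT x:{a..}. g' x * f (g x))"
    unfolding interval_integral_to_infinity_eq real_scaleR_def
    by (rule set_integral_discrete_difference[where X="{a}"]) auto
  ultimately show "(LBINT y:{g a..}. f y) = (LBINT x:{a..}. g' x * f (g x))"
    by simp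
qed

lemma set_integral_atLeast_minus_split:
  fixes f :: "real \<Rightarrow> real"
  assumes int: "set_integrable lborel {-a..} f" and "0 \<le> a"
  shows "(LBINT z:{-a..}. f z) = (LBINT z:{0..a}. f (- z)) + (LBINT z:{0..}. f z)"
proof -
  have "(LBINT z:{-a..}. f z) = (LBINT z:{-a..<0}. f z) + (LBINT z:{0..}. f z)"
  proof -
    have "{-a..} = {-a..<0} \<union> {0::real..}"
      using \<open>0 \<le> a\<close> by auto
    moreover have "set_integrable lborel {-a..<0} f" "set_integrable lborel {0..} f"
      by (rule set_integrable_subset[OF int]; use \<open>0 \<le> a\<close> in auto)+
    moreover have "{-a..<0} \<inter> {0::real..} = {}"
      by auto
    ultimately show ?thesis
      using set_integral_Un[of "{-a..<0}" "{0..}" lborel f] by simp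
  qed
  moreover have "(LBINT z:{-a..<0}. f z) = (LBINT z:{0..a}. f (- z))"
  proof -
    have "(LBINT z:{-a..<0}. f z) = (LBINT z:{-a..0}. f z)"
      by (rule set_integral_discrete_difference[where X="{0}"]) auto
    also have "\<dots> = (LBINT z:{z. - z \<in> {-a..0}}. f (- z))"
      by (rule set_integral_reflect)
    also have "{z. - z \<in> {-a..0}} = {0..a}"
      by auto
    finally show ?thesis .
  qed
  ultimately show ?thesis
    by simp
qed

section \<open>Integrability of the Green's function integrand\<close>

lemma continuous_on_psi_G_integrand:
  "kd > 0 \<Longrightarrow> continuous_on S (psi_G_integrand beta kd t x y)"
  unfolding psi_G_integrand_def[abs_def]
  by (intro continuous_intros) (auto simp: add_pos_pos)

text \<open>The Bessel argument is \<open>k |r e\<^sup>i\<^sup>\<phi> + c|\<close> with \<open>c = \<beta>t/(k\<^sup>2 + kd\<^sup>2) \<le> r/2\<close>.\<close>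
lemma psi_G_bessel_argument_ge:
  fixes beta t r kd k phi :: real
  assumes "beta > 0" "t > 0" "r > 0" "k \<ge> 0" "2 * beta * t / r \<le> k\<^sup>2"
  shows "k * r / 2 \<le> sqrt ((k * (r * cos phi) + beta * k * t / (k\<^sup>2 + kd\<^sup>2))\<^sup>2 + k\<^sup>2 * (r * sin phi)\<^sup>2)"
proof -
  define K where "K = k\<^sup>2 + kd\<^sup>2"
  define c where "c = beta * t / K"
  have "0 < 2 * beta * t / r"
    using assms by simp
  then have "0 < k\<^sup>2"
    using assms(5) by linarith
  then have "2 * beta * t / r \<le> K" "K > 0"
    using assms(5) by (simp_all add: K_def add_increasing2 add_pos_nonneg)
  then have c: "0 \<le> c" "c \<le> r / 2"
    using assms by (simp_all add: c_def field_simps)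
  have "(x + c)\<^sup>2 + y\<^sup>2 - (r - c)\<^sup>2 = 2 * c * (x + r)" if "x\<^sup>2 + y\<^sup>2 = r\<^sup>2" for x y
    using that by (simp add: power2_eq_square algebra_simps)
  from this[of "r * cos phi" "r * sin phi"]
  have "(r * cos phi + c)\<^sup>2 + (r * sin phi)\<^sup>2 - (r - c)\<^sup>2 = 2 * c * (r * cos phi + r)"
    by (simp add: power_mult_distrib flip: distrib_left)
  moreover have "0 \<le> 2 * c * (r * cos phi + r)"
    using c \<open>r > 0\<close> mult_left_mono[OF cos_ge_minus_one[of phi], of r] by simp
  moreover have "(r/2)\<^sup>2 \<le> (r - c)\<^sup>2"
    using c \<open>r > 0\<close> by (intro power_mono) auto
  ultimately have "(r/2)\<^sup>2 \<le> (r * cos phi + c)\<^sup>2 + (r * sin phi)\<^sup>2"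
    by linarith
  then have "(k * r / 2)\<^sup>2 \<le> k\<^sup>2 * ((r * cos phi + c)\<^sup>2 + (r * sin phi)\<^sup>2)"
    unfolding power_mult_distrib times_divide_eq_right[symmetric] by (rule mult_left_mono) simp
  also have "\<dots> = (k * (r * cos phi) + beta * k * t / (k\<^sup>2 + kd\<^sup>2))\<^sup>2 + k\<^sup>2 * (r * sin phi)\<^sup>2"
    by (simp add: c_def K_def field_simps power2_eq_square)
  finally show ?thesis
    by (rule real_le_rsqrt)
qed

lemma psi_G_integrand_tail_bound:
  fixes beta kd t r phi k C :: real
  assumes "beta > 0" "t > 0" "r > 0"
    and C: "\<And>x. 1 \<le> x \<Longrightarrow> \<bar>bessel_J0 x\<bar> \<le> C / sqrt x"
    and k: "2 * beta * t / r \<le> k\<^sup>2" "2 / r \<le> k"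
  shows "\<bar>psi_G_integrand beta kd t (r * cos phi) (r * sin phi) k\<bar> \<le> C * sqrt 2 / sqrt r * (1 / (k * sqrt k))"
proof -
  define a where "a = sqrt ((k * (r * cos phi) + beta * k * t / (k\<^sup>2 + kd\<^sup>2))\<^sup>2 + k\<^sup>2 * (r * sin phi)\<^sup>2)"
  have "0 \<le> C"
    using C[of 1] by simp
  have "k > 0"
    using k(2) \<open>r > 0\<close> divide_pos_pos[of 2 r] by linarith
  have "1 \<le> k * r / 2"
    using k(2) \<open>r > 0\<close> by (simp add: field_simps)
  have "k * r / 2 \<le> a"
    unfolding a_def using k assms \<open>k > 0\<close> by (intro psi_G_bessel_argument_ge) auto
  have "\<bar>bessel_J0 a\<bar> \<le> C / sqrt a"
    using C \<open>1 \<le> k * r / 2\<close> \<open>k * r / 2 \<le> a\<close> by simp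
  also have "\<dots> \<le> C / sqrt (k * r / 2)"
    using \<open>0 \<le> C\<close> \<open>1 \<le> k * r / 2\<close> \<open>k * r / 2 \<le> a\<close> by (intro divide_left_mono) auto
  finally have J: "\<bar>bessel_J0 a\<bar> \<le> C / sqrt (k * r / 2)" .
  have "k / (k\<^sup>2 + kd\<^sup>2) \<le> k / k\<^sup>2"
    using \<open>k > 0\<close> add_pos_nonneg[of "k\<^sup>2" "kd\<^sup>2"] by (intro divide_left_mono) auto
  also have "\<dots> = 1 / k"
    by (simp add: power2_eq_square)
  finally have "k / (k\<^sup>2 + kd\<^sup>2) \<le> 1 / k" .
  have "\<bar>psi_G_integrand beta kd t (r * cos phi) (r * sin phi) k\<bar> = k / (k\<^sup>2 + kd\<^sup>2) * \<bar>bessel_J0 a\<bar>"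
    unfolding psi_G_integrand_def a_def[symmetric] using \<open>k > 0\<close> by (simp add: abs_mult)
  also have "\<dots> \<le> 1 / k * (C / sqrt (k * r / 2))"
    using \<open>k / (k\<^sup>2 + kd\<^sup>2) \<le> 1 / k\<close> J by (rule mult_mono) (use \<open>k > 0\<close> in auto)
  also have "\<dots> = C * sqrt 2 / sqrt r * (1 / (k * sqrt k))"
    using \<open>k > 0\<close> \<open>r > 0\<close> by (simp add: real_sqrt_mult real_sqrt_divide field_simps)
  finally show ?thesis .
qed

lemma set_integrable_psi_G_integrand:
  fixes beta kd t r phi :: real
  assumes "beta > 0" "kd > 0" "t > 0" "r > 0"
  shows "set_integrable lborel {0..} (psi_G_integrand beta kd t (r * cos phi) (r * sin phi))"
proof -
  let ?f = "psi_G_integrand beta kd t (r * cos phi) (r * sin phi)"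
  obtain C where C: "\<And>x. 1 \<le> x \<Longrightarrow> \<bar>bessel_J0 x\<bar> \<le> C / sqrt x"
    using bessel_J0_decay by blast
  define k0 where "k0 = max (sqrt (2 * beta * t / r)) (2 / r)"
  have "k0 > 0"
    using assms by (simp add: k0_def max_def)
  have "set_integrable lborel {k0..} ?f"
  proof (rule set_integrable_bound[where f="\<lambda>k. C * sqrt 2 / sqrt r * (1 / (k * sqrt k))"])
    show "set_integrable lborel {k0..} (\<lambda>k. C * sqrt 2 / sqrt r * (1 / (k * sqrt k)))"
      using set_integrable_inverse_mult_sqrt[OF \<open>k0 > 0\<close>] by (rule set_integrable_mult_right)
    show "set_borel_measurable lborel {k0..} ?f"
      unfolding set_borel_measurable_def
      using borel_measurable_continuous_onI[OF continuous_on_psi_G_integrand[OF \<open>kd > 0\<close>]]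
      by measurable
    have "\<bar>?f k\<bar> \<le> \<bar>C * sqrt 2 / sqrt r * (1 / (k * sqrt k))\<bar>" if "k0 \<le> k" for k
    proof -
      have "sqrt (2 * beta * t / r) \<le> k" "2 / r \<le> k"
        using that by (simp_all add: k0_def)
      then have "\<bar>?f k\<bar> \<le> C * sqrt 2 / sqrt r * (1 / (k * sqrt k))"
        by (intro psi_G_integrand_tail_bound[OF assms(1,3,4) C] sqrt_le_D)
      then show ?thesis
        by linarith
    qed
    then show "AE k in lborel. k \<in> {k0..} \<longrightarrow> norm (?f k) \<le> norm (C * sqrt 2 / sqrt r * (1 / (k * sqrt k)))"
      by (auto intro!: AE_I2)
  qed
  moreover have "set_integrable lborel {0..k0} ?f"
    by (rule borel_integrable_atLeastAtMost'[OF continuous_on_psi_G_integrand[OF \<open>kd > 0\<close>]])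
  ultimately have "set_integrable lborel ({k0..} \<union> {0..k0}) ?f"
    by (rule set_integrable_Un) auto
  moreover have "{k0..} \<union> {0..k0} = {0::real..}"
    using \<open>k0 > 0\<close> by auto
  ultimately show ?thesis
    by simp
qed

section \<open>The change of variables\<close>

text \<open>The signed change of variables; \<open>c = r / sqrt \<alpha>\<close> in the application.\<close>
definition green_var :: "real \<Rightarrow> real \<Rightarrow> real \<Rightarrow> real" where
  "green_var c kd k = (c * sqrt (k\<^sup>2 + kd\<^sup>2) - 1 / (c * sqrt (k\<^sup>2 + kd\<^sup>2))) / 2"

definition green_var' :: "real \<Rightarrow> real \<Rightarrow> real \<Rightarrow> real" where
  "green_var' c kd k = (c + 1 / (c * (k\<^sup>2 + kd\<^sup>2))) * (k / sqrt (k\<^sup>2 + kd\<^sup>2)) / 2"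

lemma has_real_derivative_green_var:
  assumes "c > 0" "kd > 0"
  shows "(green_var c kd has_real_derivative green_var' c kd k) (at k)"
proof -
  have K: "k\<^sup>2 + kd\<^sup>2 > 0"
    using assms by (simp add: add_nonneg_pos)
  have outer: "((\<lambda>s. (c * s - 1 / (c * s)) / 2) has_real_derivative (c + 1 / (c * s\<^sup>2)) / 2) (at s)"
    if "s > 0" for s
    using that assms by (auto intro!: derivative_eq_intros simp: field_simps power2_eq_square)
  have inner: "((\<lambda>k. sqrt (k\<^sup>2 + kd\<^sup>2)) has_real_derivative k / sqrt (k\<^sup>2 + kd\<^sup>2)) (at k)"
    using K by (auto intro!: derivative_eq_intros simp: field_simps)
  have "((\<lambda>k. (c * sqrt (k\<^sup>2 + kd\<^sup>2) - 1 / (c * sqrt (k\<^sup>2 + kd\<^sup>2))) / 2)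
      has_real_derivative (c + 1 / (c * (sqrt (k\<^sup>2 + kd\<^sup>2))\<^sup>2)) / 2 * (k / sqrt (k\<^sup>2 + kd\<^sup>2))) (at k)"
    by (rule DERIV_chain2[OF outer inner]) (use K in simp)
  then show ?thesis
    unfolding green_var_def[abs_def] green_var'_def using K by (simp add: ac_simps)
qed

lemma filterlim_green_var_at_top: "c > 0 \<Longrightarrow> filterlim (green_var c kd) at_top at_top"
  unfolding green_var_def by real_asymp

lemma sqrt_sq_plus_one_half_diff_inverse:
  fixes s :: real
  assumes "s > 0"
  shows "sqrt (((s - 1/s) / 2)\<^sup>2 + 1) = (s + 1/s) / 2"
proof -
  have "((s - 1/s) / 2)\<^sup>2 + 1 = ((s + 1/s) / 2)\<^sup>2"
    using assms by (simp add: field_simps power2_eq_square)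
  then show ?thesis
    using assms by simp
qed

lemma green_var'_div_sqrt:
  assumes "c > 0" "kd > 0"
  shows "green_var' c kd k / sqrt ((green_var c kd k)\<^sup>2 + 1) = k / (k\<^sup>2 + kd\<^sup>2)"
proof -
  define q where "q = sqrt (k\<^sup>2 + kd\<^sup>2)"
  have q: "q > 0" "q\<^sup>2 = k\<^sup>2 + kd\<^sup>2"
    using assms by (simp_all add: q_def add_nonneg_pos)
  have sqrt_eq: "sqrt ((green_var c kd k)\<^sup>2 + 1) = (c * q + 1 / (c * q)) / 2"
    unfolding green_var_def q_def[symmetric] using assms q
    by (intro sqrt_sq_plus_one_half_diff_inverse) simp
  have green_var'_eq: "green_var' c kd k = (c + 1 / (c * q\<^sup>2)) * (k / q) / 2"
    unfolding green_var'_def q_def[symmetric] q(2) by simp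
  have "(c + 1 / (c * q\<^sup>2)) * (k / q) / 2 = k / q\<^sup>2 * ((c * q + 1 / (c * q)) / 2)"
    using assms q(1) by (simp add: field_simps power2_eq_square)
  moreover have "(c * q + 1 / (c * q)) / 2 > 0"
    using assms q(1) by (auto intro!: divide_pos_pos add_pos_pos mult_pos_pos)
  ultimately have "(c + 1 / (c * q\<^sup>2)) * (k / q) / 2 / ((c * q + 1 / (c * q)) / 2) = k / q\<^sup>2"
    by simp
  then show ?thesis
    unfolding sqrt_eq green_var'_eq q(2) .
qed

text \<open>Inverting the change of variables: \<open>(k\<^sup>2 + kd\<^sup>2) r\<^sup>2 = \<alpha> (sqrt(z\<^sup>2 + 1) + z)\<^sup>2\<close>.\<close>
lemma delta2_green_var:
  assumes "alpha > 0" "kd > 0" "r > 0"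
  shows "delta2 alpha kd r (green_var (r / sqrt alpha) kd k) = k\<^sup>2 / (k\<^sup>2 + kd\<^sup>2)"
proof -
  define K where "K = k\<^sup>2 + kd\<^sup>2"
  define s where "s = r / sqrt alpha * sqrt K"
  have "K > 0"
    using assms by (simp add: K_def add_nonneg_pos)
  then have "s > 0" "alpha * s\<^sup>2 = r\<^sup>2 * K"
    using assms by (simp_all add: s_def power_mult_distrib power_divide)
  have z: "green_var (r / sqrt alpha) kd k = (s - 1/s) / 2"
    unfolding green_var_def K_def[symmetric] s_def ..
  have inverse: "sqrt (((s - 1/s) / 2)\<^sup>2 + 1) + (s - 1/s) / 2 = s"
    unfolding sqrt_sq_plus_one_half_diff_inverse[OF \<open>s > 0\<close>] by (simp add: field_simps)
  have "delta2 alpha kd r (green_var (r / sqrt alpha) kd k) = 1 - kd\<^sup>2 * r\<^sup>2 / (r\<^sup>2 * K)"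
    unfolding delta2_def z inverse \<open>alpha * s\<^sup>2 = r\<^sup>2 * K\<close> ..
  also have "\<dots> = 1 - kd\<^sup>2 / K"
    using \<open>r > 0\<close> by simp
  also have "\<dots> = (K - kd\<^sup>2) / K"
    using \<open>K > 0\<close> by (simp add: diff_divide_distrib)
  finally show ?thesis
    unfolding K_def by simp
qed

lemma A2_green_var:
  assumes "beta > 0" "kd > 0" "t > 0" "r > 0"
  defines "alpha \<equiv> beta * r * t"
  shows "A2 alpha (cos (phi / 2)) kd r (green_var (r / sqrt alpha) kd k)
       = sqrt ((k * (r * cos phi) + beta * k * t / (k\<^sup>2 + kd\<^sup>2))\<^sup>2 + k\<^sup>2 * (r * sin phi)\<^sup>2)"
proof -
  define K where "K = k\<^sup>2 + kd\<^sup>2"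
  define s where "s = r / sqrt alpha * sqrt K"
  have "alpha > 0" "K > 0"
    using assms by (simp_all add: alpha_def K_def add_nonneg_pos)
  have s: "s > 0" "s\<^sup>2 = r\<^sup>2 * K / alpha"
    using \<open>alpha > 0\<close> \<open>K > 0\<close> \<open>r > 0\<close> by (simp_all add: s_def power_mult_distrib power_divide)
  have z: "green_var (r / sqrt alpha) kd k = (s - 1/s) / 2"
    unfolding green_var_def K_def[symmetric] s_def ..
  have z2: "(green_var (r / sqrt alpha) kd k)\<^sup>2 = (s\<^sup>2 + 1 / s\<^sup>2 - 2) / 4"
    unfolding z using \<open>s > 0\<close> by (simp add: field_simps power2_eq_square)
  have gamma2: "(cos (phi / 2))\<^sup>2 = (1 + cos phi) / 2"
    using cos_double_cos[of "phi / 2"] by simp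
  have sin2: "(r * sin phi)\<^sup>2 = r\<^sup>2 * (1 - (cos phi)\<^sup>2)"
    by (simp add: power_mult_distrib sin_squared_eq)
  have "4 * alpha * (k\<^sup>2 / K) * ((s\<^sup>2 + 1 / s\<^sup>2 - 2) / 4 + (1 + cos phi) / 2)
      = k\<^sup>2 * r\<^sup>2 + 2 * alpha * k\<^sup>2 * cos phi / K + alpha\<^sup>2 * k\<^sup>2 / (r\<^sup>2 * K\<^sup>2)"
    unfolding s(2) using \<open>alpha > 0\<close> \<open>K > 0\<close> \<open>r > 0\<close> by (simp add: field_simps power2_eq_square)
  also have "\<dots> = (k * (r * cos phi) + beta * k * t / K)\<^sup>2 + k\<^sup>2 * (r * sin phi)\<^sup>2"
    unfolding sin2 alpha_def using \<open>K > 0\<close> \<open>r > 0\<close> by (simp add: field_simps power2_eq_square)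
  finally show ?thesis
    unfolding A2_def delta2_green_var[OF \<open>alpha > 0\<close> \<open>kd > 0\<close> \<open>r > 0\<close>] z2 gamma2 K_def
    by (simp only:)
qed

lemma green_var'_mult_eq_psi_G_integrand:
  assumes "beta > 0" "kd > 0" "t > 0" "r > 0"
  defines "alpha \<equiv> beta * r * t"
  defines "c \<equiv> r / sqrt alpha"
  shows "green_var' c kd k * (bessel_J0 (A2 alpha (cos (phi / 2)) kd r (green_var c kd k))
           / sqrt ((green_var c kd k)\<^sup>2 + 1))
       = psi_G_integrand beta kd t (r * cos phi) (r * sin phi) k"
proof -
  have "c > 0"
    using assms by (simp add: c_def alpha_def)
  have "green_var' c kd k * (bessel_J0 (A2 alpha (cos (phi / 2)) kd r (green_var c kd k))
           / sqrt ((green_var c kd k)\<^sup>2 + 1))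
      = bessel_J0 (A2 alpha (cos (phi / 2)) kd r (green_var c kd k))
           * (green_var' c kd k / sqrt ((green_var c kd k)\<^sup>2 + 1))"
    by (simp add: ac_simps)
  also have "\<dots> = k / (k\<^sup>2 + kd\<^sup>2) * bessel_J0 (A2 alpha (cos (phi / 2)) kd r (green_var c kd k))"
    unfolding green_var'_div_sqrt[OF \<open>c > 0\<close> \<open>kd > 0\<close>] by simp
  also have "\<dots> = psi_G_integrand beta kd t (r * cos phi) (r * sin phi) k"
    unfolding psi_G_integrand_def c_def alpha_def A2_green_var[OF assms(1-4)] ..
  finally show ?thesis .
qed

lemma continuous_on_bessel_J0_A2:
  assumes "alpha > 0"
  shows "continuous_on S (\<lambda>z. bessel_J0 (A2 alpha gamma kd r z) / sqrt (z\<^sup>2 + 1))"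
proof -
  have "\<bar>z\<bar> < sqrt (z\<^sup>2 + 1)" for z :: real
    by (simp add: real_less_rsqrt)
  then have "alpha * (sqrt (z\<^sup>2 + 1) + z)\<^sup>2 \<noteq> 0" "sqrt (z\<^sup>2 + 1) \<noteq> 0" for z
    using assms by (smt (verit) mult_eq_0_iff power_eq_0_iff)+
  then show ?thesis
    unfolding A2_def delta2_def by (intro continuous_intros) auto
qed

lemma psi_G_integral_substitution:
  fixes beta kd t r phi :: real
  assumes "beta > 0" "kd > 0" "t > 0" "r > 0"
  defines "alpha \<equiv> beta * r * t"
  defines "f \<equiv> \<lambda>z. bessel_J0 (A2 alpha (cos (phi / 2)) kd r z) / sqrt (z\<^sup>2 + 1)"
    and "z0 \<equiv> (kd\<^sup>2 * r\<^sup>2 - alpha) / (sqrt (4 * alpha) * kd * r)"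
  shows "set_integrable lborel {z0..} f"
    and "(LBINT k:{0..}. psi_G_integrand beta kd t (r * cos phi) (r * sin phi) k) = (LBINT z:{z0..}. f z)"
proof -
  define c where "c = r / sqrt alpha"
  have "alpha > 0" "c > 0"
    using assms by (simp_all add: alpha_def c_def)
  have z0: "green_var c kd 0 = z0"
    using \<open>alpha > 0\<close> assms(2,4)
    by (simp add: green_var_def z0_def c_def real_sqrt_mult field_simps power2_eq_square)
  have subst: "green_var' c kd k * f (green_var c kd k) = psi_G_integrand beta kd t (r * cos phi) (r * sin phi) k"
    for k unfolding f_def c_def alpha_def by (rule green_var'_mult_eq_psi_G_integrand[OF assms(1-4)])
  have int: "set_integrable lborel {0..} (\<lambda>k. green_var' c kd k * f (green_var c kd k))"
    unfolding subst by (rule set_integrable_psi_G_integrand[OF assms(1-4)])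
  have cont_f: "continuous_on UNIV f"
    unfolding f_def by (rule continuous_on_bessel_J0_A2[OF \<open>alpha > 0\<close>])
  have cont_green_var': "isCont (green_var' c kd) k" for k
    unfolding green_var'_def using \<open>c > 0\<close> \<open>kd > 0\<close>
    by (intro continuous_intros) (auto simp: add_nonneg_pos)
  have nonneg_green_var': "0 \<le> green_var' c kd k" if "0 \<le> k" for k
    unfolding green_var'_def using that \<open>c > 0\<close> \<open>kd > 0\<close> by (simp add: add_nonneg_pos)
  note substitution = set_integral_substitution_atLeast[where f=f and a=0,
      OF has_real_derivative_green_var[OF \<open>c > 0\<close> \<open>kd > 0\<close>] cont_green_var' nonneg_green_var'
      filterlim_green_var_at_top[OF \<open>c > 0\<close>] cont_f int]
  show "set_integrable lborel {z0..} f"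
    using substitution(1) unfolding z0 .
  show "(LBINT k:{0..}. psi_G_integrand beta kd t (r * cos phi) (r * sin phi) k) = (LBINT z:{z0..}. f z)"
    using substitution(2) unfolding z0 subst by simp
qed

lemma near_far_region_iff:
  fixes beta kd t r :: real
  assumes "kd > 0" "r > 0"
  shows "r < beta * t / kd\<^sup>2 \<longleftrightarrow> kd\<^sup>2 * r\<^sup>2 < beta * r * t"
    and "beta * t / kd\<^sup>2 < r \<longleftrightarrow> beta * r * t < kd\<^sup>2 * r\<^sup>2"
proof -
  have "kd\<^sup>2 * r\<^sup>2 = (r * kd\<^sup>2) * r" "beta * r * t = (beta * t) * r"
    by (simp_all add: power2_eq_square ac_simps)
  then show "r < beta * t / kd\<^sup>2 \<longleftrightarrow> kd\<^sup>2 * r\<^sup>2 < beta * r * t"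
    and "beta * t / kd\<^sup>2 < r \<longleftrightarrow> beta * r * t < kd\<^sup>2 * r\<^sup>2"
    using assms by (simp_all add: pos_less_divide_eq pos_divide_less_eq ac_simps)
qed

theorem proposition3p3:
  fixes beta kd N t r phi :: real
  assumes "beta > 0" and "kd > 0" and "t > 0" and "r > 0"
  defines "x \<equiv> r * cos phi" and "y \<equiv> r * sin phi"
      and "alpha \<equiv> beta * r * t" and "gamma \<equiv> cos (phi / 2)"
  defines "f1 \<equiv> (\<lambda>z. bessel_J0 (A1 alpha gamma kd r z) / sqrt (z^2 + 1))"
      and "f2 \<equiv> (\<lambda>z. bessel_J0 (A2 alpha gamma kd r z) / sqrt (z^2 + 1))"
      and "z01 \<equiv> (alpha - kd^2 * r^2) / (sqrt (4 * alpha) * kd * r)"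
      and "z02 \<equiv> (kd^2 * r^2 - alpha) / (sqrt (4 * alpha) * kd * r)"
  shows
    "set_integrable lborel {0..} (psi_G_integrand beta kd t x y)
     \<and> (r < beta * t / kd^2 \<longrightarrow>
          z01 > 0
          \<and> set_integrable lborel {0..z01} f1
          \<and> set_integrable lborel {0..} f2
          \<and> set_integrable lborel {-z01..} f2
          \<and> psi_G N beta kd t x y
              = - (N / (2*pi)) * ((LBINT z:{0..z01}. f1 z) + (LBINT z:{0..}. f2 z))
          \<and> psi_G N beta kd t x y = - (N / (2*pi)) * (LBINT z:{-z01..}. f2 z))
     \<and> (r > beta * t / kd^2 \<longrightarrow>
          z02 > 0
          \<and> set_integrable lborel {z02..} f2
          \<and> psi_G N beta kd t x y = - (N / (2*pi)) * (LBINT z:{z02..}. f2 z))"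
proof -
  have int_f2: "set_integrable lborel {z02..} f2"
    and psi_G: "psi_G N beta kd t x y = - (N / (2*pi)) * (LBINT z:{z02..}. f2 z)"
    using psi_G_integral_substitution[OF assms(1-4), of phi]
    unfolding psi_G_def x_def y_def alpha_def gamma_def f2_def z02_def by simp_all
  have "z02 = - z01"
    unfolding z01_def z02_def by (simp add: minus_divide_left)
  have f1: "f1 = (\<lambda>z. f2 (- z))"
    unfolding f1_def f2_def A1_def A2_def delta1_def delta2_def by simp
  have "alpha > 0"
    using assms by (simp add: alpha_def)
  note near_far_region_iff[OF \<open>kd > 0\<close> \<open>r > 0\<close>, of beta t, folded alpha_def]
  moreover have "0 < sqrt (4 * alpha) * kd * r"
    using assms \<open>alpha > 0\<close> by simp
  ultimately have "r < beta * t / kd\<^sup>2 \<longleftrightarrow> 0 < z01" and "beta * t / kd\<^sup>2 < r \<longleftrightarrow> 0 < z02"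
    unfolding z01_def z02_def by (simp_all add: zero_less_divide_iff)
  moreover have "set_integrable lborel {0..z01} f1"
    unfolding f1 f2_def using \<open>alpha > 0\<close>
    by (intro borel_integrable_atLeastAtMost' continuous_on_compose2[OF continuous_on_bessel_J0_A2]
        continuous_intros) auto
  moreover have "0 < z01 \<Longrightarrow> set_integrable lborel {0..} f2"
    using int_f2 \<open>z02 = - z01\<close> by (auto elim!: set_integrable_subset)
  ultimately show ?thesis
    using int_f2 psi_G set_integral_atLeast_minus_split[where f=f2 and a=z01] \<open>z02 = - z01\<close> f1
    by (auto simp: set_integrable_psi_G_integrand x_def y_def assms)
qed

end
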